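(* For every formula $A$: $A$ is a theorem of the provability logic $\mathsf{GL}$ if and only if the one-element sequent $A$ is cut-free provable in the nested sequent calculus (rules (id), ($\land$), ($\lor$), ($\Box$), ($\Diamond$)).
   Context: $\mathsf{GL}$ is the normal modal logic obtained from $\mathsf{K}$ by adding the Löb axiom $\Box(\Box A\to A)\to\Box A$; a formula of the language below is read in $\mathsf{GL}$ by interpreting $\alpha^\perp$ as $\neg\alpha$ and $\Diamond$ as $\neg\Box\neg$. Fix a countable set of atoms; each atom $\alpha$ has a dual negative atom $\alpha^\perp$. Formulas: $A,B ::= \alpha \mid \alpha^\perp \mid A\land B \mid A\lor B \mid \Box A \mid \Diamond A$. Negation $A^\perp$ is defined by $(\alpha)^\perp=\alpha^\perp$, $(\alpha^\perp)^\perp=\alpha$, $(A\land B)^\perp=A^\perp\lor B^\perp$, $(A\lor B)^\perp=A^\perp\land B^\perp$, $(\Box A)^\perp=\Diamond A^\perp$, $(\Diamond A)^\perp=\Box A^\perp$. A (nested) sequent is given by $\Gamma,\Delta ::= \cdot \mid \Gamma, A \mid \Gamma, [\Delta]$, where $\cdot$ is the empty sequent; sequents are taken up to exchange (finite multisets of formulas and bracketed sequents), and $\Gamma,\Delta$ denotes juxtaposition. A unary context is given by $\Gamma\{-\} ::= \Delta,\{-\} \mid \Delta,[\Gamma\{-\}]$ (a sequent with exactly one hole); $\Gamma\{\Delta\}$ is the result of filling the hole with $\Delta$, and $\Gamma\{\}$ means $\Gamma\{\cdot\}$. Depth: $\mathrm{depth}(\Delta,\{-\})=0$, $\mathrm{depth}(\Delta,[\Gamma\{-\}])=\mathrm{depth}(\Gamma\{-\})+1$.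 Rules: (id) $\Gamma\{\alpha^\perp,\alpha\}$ with no premises ($\alpha$ an atom); ($\land$) from $\Gamma\{A\}$ and $\Gamma\{B\}$ infer $\Gamma\{A\land B\}$; ($\lor$) from $\Gamma\{A,B\}$ infer $\Gamma\{A\lor B\}$; ($\Box$) from $\Gamma\{[\Diamond A^\perp, A]\}$ infer $\Gamma\{\Box A\}$; ($\Diamond$) from $\Gamma\{\Delta\{A\},\Diamond A\}$ infer $\Gamma\{\Delta\{\},\Diamond A\}$, provided $\mathrm{depth}(\Delta\{-\})>0$; (cut) from $\Gamma\{A\}$ and $\Gamma\{A^\perp\}$ infer $\Gamma\{\}$. "Cut-free provable" means derivable using (id), ($\land$), ($\lor$), ($\Box$), ($\Diamond$) only. *)

theory Defs
  imports Main "HOL-Library.Multiset"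
begin

datatype fm =
    At nat
  | NAt nat
  | And fm fm
  | Or fm fm
  | Box fm
  | Dia fm

fun neg :: "fm \<Rightarrow> fm" where
  "neg (At a) = NAt a"
| "neg (NAt a) = At a"
| "neg (And A B) = Or (neg A) (neg B)"
| "neg (Or A B) = And (neg A) (neg B)"
| "neg (Box A) = Dia (neg A)"
| "neg (Dia A) = Box (neg A)"

datatype mfm = Var nat | Bot | Imp mfm mfm | MBox mfm

definition MNeg :: "mfm \<Rightarrow> mfm" where "MNeg A = Imp A Bot"
definition MOr :: "mfm \<Rightarrow> mfm \<Rightarrow> mfm" where "MOr A B = Imp (MNeg A) B"
definition MAnd :: "mfm \<Rightarrow> mfm \<Rightarrow> mfm" where "MAnd A B = MNeg (Imp A (MNeg B))"
definition MDia :: "mfm \<Rightarrow> mfm" where "MDia A = MNeg (MBox (MNeg A))"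

inductive GL :: "mfm \<Rightarrow> bool" where
  ax1: "GL (Imp A (Imp B A))"
| ax2: "GL (Imp (Imp A (Imp B C)) (Imp (Imp A B) (Imp A C)))"
| ax3: "GL (Imp (MNeg (MNeg A)) A)"
| axK: "GL (Imp (MBox (Imp A B)) (Imp (MBox A) (MBox B)))"
| axL: "GL (Imp (MBox (Imp (MBox A) A)) (MBox A))"
| mp: "GL (Imp A B) \<Longrightarrow> GL A \<Longrightarrow> GL B"
| nec: "GL A \<Longrightarrow> GL (MBox A)"

fun tr :: "fm \<Rightarrow> mfm" where
  "tr (At a) = Var a"
| "tr (NAt a) = MNeg (Var a)"
| "tr (And A B) = MAnd (tr A) (tr B)"
| "tr (Or A B) = MOr (tr A) (tr B)"
| "tr (Box A) = MBox (tr A)"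
| "tr (Dia A) = MDia (tr A)"

text \<open>A sequent: a finite multiset of formulas and a finite multiset of bracketed sequents.\<close>
datatype seq = Seq "fm multiset" "seq multiset"

fun sjoin :: "seq \<Rightarrow> seq \<Rightarrow> seq" where
  "sjoin (Seq F1 S1) (Seq F2 S2) = Seq (F1 + F2) (S1 + S2)"

definition sempty :: seq where "sempty = Seq {#} {#}"
definition sfm :: "fm \<Rightarrow> seq" where "sfm A = Seq {#A#} {#}"
definition sbr :: "seq \<Rightarrow> seq" where "sbr D = Seq {#} {#D#}"

text \<open>Unary contexts: Hole D is \<open>D,{-}\<close>; Nest D C is \<open>D,[C{-}]\<close>.\<close>
datatype ctx = Hole seq | Nest seq ctx

fun fill :: "ctx \<Rightarrow> seq \<Rightarrow> seq" where
  "fill (Hole D) X = sjoin D X"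
| "fill (Nest D C) X = sjoin D (sbr (fill C X))"

fun depth :: "ctx \<Rightarrow> nat" where
  "depth (Hole D) = 0"
| "depth (Nest D C) = Suc (depth C)"

inductive cfprov :: "seq \<Rightarrow> bool" where
  rid: "cfprov (fill G (Seq {#NAt a, At a#} {#}))"
| rand: "cfprov (fill G (sfm A)) \<Longrightarrow> cfprov (fill G (sfm B)) \<Longrightarrow> cfprov (fill G (sfm (And A B)))"
| ror: "cfprov (fill G (Seq {#A, B#} {#})) \<Longrightarrow> cfprov (fill G (sfm (Or A B)))"
| rbox: "cfprov (fill G (sbr (Seq {#Dia (neg A), A#} {#}))) \<Longrightarrow> cfprov (fill G (sfm (Box A)))"
| rdia: "depth D > 0 \<Longrightarrow> cfprov (fill G (sjoin (fill D (sfm A)) (sfm (Dia A))))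
         \<Longrightarrow> cfprov (fill G (sjoin (fill D sempty) (sfm (Dia A))))"

end

theory Submission
  imports Defs
begin

(*
  Both directions pass through a shallow calculus sprov P X: X is one level of a nested
  sequent and P collects the B for which Dia B occurs at an outer level, which the (Dia)
  rule may copy into X. Every shallow proof translates into a cut-free nested proof, and
  every shallow proof is sound for GL when an inherited B is read as B or Dia B; the Loeb
  axiom validates the box rule, whose premise inherits the diamonds of its conclusion.
  Conversely, if A has no shallow proof, saturating the failed shallow sequents inside
  the finite closure of A yields a transitive, conversely well-founded Kripke model that
  refutes A. Since GL and the nested calculus are both sound for such models, a theorem
  of either one has a shallow proof, and hence is a theorem of the other.
*)

section \<open>Propositional completeness of GL\<close>

lemma GL_imp_refl: "GL (Imp A A)"
  using GL.mp[OF GL.mp[OF ax2 ax1] ax1] .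

inductive GL_from :: "mfm set \<Rightarrow> mfm \<Rightarrow> bool" for H where
  assm: "A \<in> H \<Longrightarrow> GL_from H A"
| gl: "GL A \<Longrightarrow> GL_from H A"
| mp: "GL_from H (Imp A B) \<Longrightarrow> GL_from H A \<Longrightarrow> GL_from H B"

lemma GL_from_empty: "GL_from {} A \<Longrightarrow> GL A"
  by (induction rule: GL_from.induct) (simp_all add: GL.mp)

lemma GL_from_mono: "GL_from H A \<Longrightarrow> H \<subseteq> H' \<Longrightarrow> GL_from H' A"
  by (induction rule: GL_from.induct) (simp_all add: GL_from.assm GL_from.gl GL_from.mp subsetD)

lemma GL_from_deduction: "GL_from (insert A H) B \<Longrightarrow> GL_from H (Imp A B)"
proof (induction rule: GL_from.induct)
  case (assm C)
  show ?case
  proof (cases "C = A")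
    case True
    then show ?thesis
      using GL_imp_refl by (simp add: GL_from.gl)
  next
    case False
    then have "GL_from H C"
      using assm by (simp add: GL_from.assm)
    then show ?thesis
      by (rule GL_from.mp[OF GL_from.gl[OF ax1]])
  qed
next
  case (gl C)
  then show ?case
    using GL_from.mp[OF GL_from.gl[OF ax1] GL_from.gl] by blast
next
  case (mp C D)
  then show ?case
    using GL_from.mp[OF GL_from.mp[OF GL_from.gl[OF ax2]]] by blast
qed

lemma GL_from_imp_iff: "GL_from H (Imp A B) \<longleftrightarrow> GL_from (insert A H) B"
proof
  assume "GL_from H (Imp A B)"
  then have "GL_from (insert A H) (Imp A B)"
    by (rule GL_from_mono) blast
  then show "GL_from (insert A H) B"
    by (rule GL_from.mp) (simp add: GL_from.assm)
qed (rule GL_from_deduction)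

lemma GL_from_contra:
  assumes "GL_from (insert (MNeg A) H) Bot"
  shows "GL_from H A"
proof -
  have "GL_from H (MNeg (MNeg A))"
    using GL_from_deduction[OF assms] by (simp add: MNeg_def)
  then show ?thesis
    by (rule GL_from.mp[OF GL_from.gl[OF ax3]])
qed

lemma GL_from_cases:
  assumes "GL_from (insert A H) B" and "GL_from (insert (MNeg A) H) B"
  shows "GL_from H B"
proof (rule GL_from_contra)
  let ?H = "insert (MNeg B) H"
  have nB: "GL_from (insert C ?H) (Imp B Bot)" for C
    by (rule GL_from.assm) (simp add: MNeg_def)
  have "GL_from (insert A ?H) Bot"
    using GL_from.mp[OF nB GL_from_mono[OF assms(1)]] by blast
  then have nA: "GL_from ?H (MNeg A)"
    unfolding MNeg_def by (rule GL_from_deduction)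
  have "GL_from (insert (MNeg A) ?H) Bot"
    using GL_from.mp[OF nB GL_from_mono[OF assms(2)]] by blast
  then have "GL_from ?H (Imp (MNeg A) Bot)"
    by (rule GL_from_deduction)
  then show "GL_from ?H Bot"
    using nA by (rule GL_from.mp)
qed

lemma GL_from_Bot: "GL_from H Bot \<Longrightarrow> GL_from H B"
  using GL_from.mp[OF GL_from.gl[OF ax3[unfolded MNeg_def]] GL_from.mp[OF GL_from.gl[OF ax1]]] .

lemma GL_from_imp_if_MNeg: "GL_from H (MNeg A) \<Longrightarrow> GL_from H (Imp A B)"
  unfolding MNeg_def GL_from_imp_iff by (rule GL_from_Bot)

lemma GL_from_MNeg_ImpI:
  assumes "GL_from H A" and "GL_from H (MNeg B)"
  shows "GL_from H (MNeg (Imp A B))"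
proof -
  let ?H = "insert (Imp A B) H"
  have "GL_from ?H (Imp B Bot)" and "GL_from ?H (Imp A B)" and "GL_from ?H A"
    using GL_from_mono[OF assms(2) subset_insertI] GL_from_mono[OF assms(1) subset_insertI]
    by (auto simp: MNeg_def intro: GL_from.assm)
  then have "GL_from ?H Bot"
    by (blast intro: GL_from.mp)
  then show ?thesis
    unfolding MNeg_def by (rule GL_from_deduction)
qed

fun peval :: "(mfm \<Rightarrow> bool) \<Rightarrow> mfm \<Rightarrow> bool" where
  "peval v (Var a) = v (Var a)"
| "peval v Bot = False"
| "peval v (Imp A B) = (peval v A \<longrightarrow> peval v B)"
| "peval v (MBox A) = v (MBox A)"

fun patoms :: "mfm \<Rightarrow> mfm set" where
  "patoms (Var a) = {Var a}"
| "patoms Bot = {}"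
| "patoms (Imp A B) = patoms A \<union> patoms B"
| "patoms (MBox A) = {MBox A}"

lemma finite_patoms: "finite (patoms F)"
  by (induction F) auto

definition lit :: "(mfm \<Rightarrow> bool) \<Rightarrow> mfm \<Rightarrow> mfm" where
  "lit v p = (if v p then p else MNeg p)"

lemma GL_from_kalmar:
  assumes "lit v ` patoms F \<subseteq> H"
  shows "GL_from H (if peval v F then F else MNeg F)"
  using assms
proof (induction F)
  case Bot
  show ?case by (simp add: MNeg_def GL_from.gl GL_imp_refl)
next
  case (Imp A B)
  have "lit v ` patoms A \<subseteq> H" "lit v ` patoms B \<subseteq> H"
    using Imp.prems by auto
  note Imp.IH(1)[OF this(1)] Imp.IH(2)[OF this(2)]
  then show ?case
    using GL_from_imp_if_MNeg GL_from_MNeg_ImpI GL_from.mp[OF GL_from.gl[OF ax1]]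
    by (cases "peval v A"; cases "peval v B") simp_all
qed (auto simp: lit_def intro: GL_from.assm)

lemma GL_from_lits_elim:
  assumes "finite Q" and "\<And>v. GL_from (lit v ` (Q \<union> T)) F"
  shows "GL_from (lit v ` T) F"
  using assms
proof (induction Q arbitrary: v rule: finite_induct)
  case (insert q Q)
  show ?case
  proof (rule insert.IH)
    fix v
    show "GL_from (lit v ` (Q \<union> T)) F"
    proof (cases "q \<in> Q \<union> T")
      case True
      then show ?thesis using insert.prems[of v] by (simp add: insert_absorb)
    next
      case False
      then have "lit (v(q := b)) ` (Q \<union> T) = lit v ` (Q \<union> T)" for b
        by (auto simp: lit_def image_def)
      then show ?thesis
        using insert.prems[of "v(q := True)"] insert.prems[of "v(q := False)"]
        by (auto simp: lit_def intro: GL_from_cases)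
    qed
  qed
qed simp

theorem GL_tautology:
  assumes "\<And>v. peval v F"
  shows "GL F"
proof -
  have "GL_from (lit v ` (patoms F \<union> {})) F" for v
    using GL_from_kalmar[of v F] assms by simp
  then have "GL_from {} F"
    using GL_from_lits_elim[of "patoms F" "{}" F] finite_patoms by simp
  then show ?thesis
    by (rule GL_from_empty)
qed

lemma peval_derived_simps [simp]:
  "peval v (MNeg A) \<longleftrightarrow> \<not> peval v A"
  "peval v (MOr A B) \<longleftrightarrow> peval v A \<or> peval v B"
  "peval v (MAnd A B) \<longleftrightarrow> peval v A \<and> peval v B"
  "peval v (MDia A) \<longleftrightarrow> \<not> v (MBox (MNeg A))"
  by (auto simp: MNeg_def MOr_def MAnd_def MDia_def)

lemma GL_prop_mp:
  assumes "GL A" and "\<And>v. peval v A \<Longrightarrow> peval v B"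
  shows "GL B"
proof -
  have "GL (Imp A B)"
    by (rule GL_tautology) (simp add: assms(2))
  then show ?thesis
    using assms(1) by (rule GL.mp)
qed

lemma GL_conj:
  assumes "GL A" and "GL B"
  shows "GL (MAnd A B)"
proof -
  have "GL (Imp B (MAnd A B))"
    by (rule GL_prop_mp[OF assms(1)]) simp
  then show ?thesis
    using assms(2) by (rule GL.mp)
qed

lemma GL_box_mono: "GL (Imp A B) \<Longrightarrow> GL (Imp (MBox A) (MBox B))"
  using axK GL.mp nec by blast

lemma GL_box_conj: "GL (Imp (MBox A) (Imp (MBox B) (MBox (MAnd A B))))"
proof -
  have "GL (Imp (MBox A) (MBox (Imp B (MAnd A B))))"
    by (rule GL_box_mono, rule GL_tautology) simp
  then show ?thesis
    by (rule GL_prop_mp[OF GL_conj[OF _ axK[of B "MAnd A B"]]]) auto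
qed

lemma GL_box_box: "GL (Imp (MBox A) (MBox (MBox A)))"
proof -
  define C where "C = MAnd A (MBox A)"
  have C_box_box: "GL (Imp (MBox C) (MBox (MBox A)))"
    and C_box: "GL (Imp (MBox C) (MBox A))"
    by (rule GL_box_mono, rule GL_tautology, simp add: C_def)+
  have "GL (Imp A (Imp (MBox C) C))"
    by (rule GL_prop_mp[OF C_box]) (simp add: C_def)
  then have "GL (Imp (MBox A) (MBox (Imp (MBox C) C)))"
    by (rule GL_box_mono)
  then show ?thesis
    by (rule GL_prop_mp[OF GL_conj[OF _ GL_conj[OF axL[of C] C_box_box]]]) auto
qed

lemma GL_dia_dia: "GL (Imp (MDia (MDia A)) (MDia A))"
proof -
  have "GL (Imp (MBox (MBox (MNeg A))) (MBox (MNeg (MNeg (MBox (MNeg A))))))"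
    by (rule GL_box_mono, rule GL_tautology) simp
  then show ?thesis
    unfolding MDia_def[of "MDia A"] MDia_def[of A]
    by (rule GL_prop_mp[OF GL_conj[OF _ GL_box_box[of "MNeg A"]]]) auto
qed

lemma GL_dia_or: "GL (Imp (MDia (MOr A B)) (MOr (MDia A) (MDia B)))"
proof -
  have "GL (Imp (MBox (MAnd (MNeg A) (MNeg B))) (MBox (MNeg (MOr A B))))"
    by (rule GL_box_mono, rule GL_tautology) simp
  then show ?thesis
    by (rule GL_prop_mp[OF GL_conj[OF _ GL_box_conj[of "MNeg A" "MNeg B"]]]) auto
qed

definition Disj :: "mfm set \<Rightarrow> mfm" where
  "Disj S = foldr MOr (SOME xs. set xs = S) Bot"

lemma peval_foldr_MOr: "peval v (foldr MOr xs Bot) \<longleftrightarrow> (\<exists>x\<in>set xs. peval v x)"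
  by (induction xs) auto

lemma Disj_eq_foldr:
  assumes "finite S"
  obtains xs where "set xs = S" and "Disj S = foldr MOr xs Bot"
proof -
  have "set (SOME xs. set xs = S) = S"
    using someI_ex[OF finite_list[OF assms]] .
  then show ?thesis
    using that Disj_def by blast
qed

lemma peval_Disj: "finite S \<Longrightarrow> peval v (Disj S) \<longleftrightarrow> (\<exists>x\<in>S. peval v x)"
  by (elim Disj_eq_foldr) (simp add: peval_foldr_MOr)

lemma GL_dia_foldr_MOr:
  assumes "\<And>x. x \<in> set xs \<Longrightarrow> GL (Imp (MDia x) T)"
  shows "GL (Imp (MDia (foldr MOr xs Bot)) T)"
  using assms
proof (induction xs)
  case Nil
  have "GL (MBox (MNeg Bot))"
    using nec GL_imp_refl unfolding MNeg_def by blast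
  then show ?case
    by (rule GL_prop_mp) simp
next
  case (Cons x xs)
  have "GL (Imp (MDia x) T)" and "GL (Imp (MDia (foldr MOr xs Bot)) T)"
    using Cons by simp_all
  then show ?case
    by (rule GL_prop_mp[OF GL_conj[OF GL_dia_or[of x "foldr MOr xs Bot"] GL_conj]]) auto
qed

lemma GL_dia_Disj:
  assumes "finite S" and "\<And>x. x \<in> S \<Longrightarrow> GL (Imp (MDia x) T)"
  shows "GL (Imp (MDia (Disj S)) T)"
proof -
  obtain xs where "set xs = S" and "Disj S = foldr MOr xs Bot"
    using assms(1) by (rule Disj_eq_foldr)
  then show ?thesis
    using GL_dia_foldr_MOr[of xs T] assms(2) by simp
qed

lemma GL_loeb_disj:
  assumes excl: "GL (Imp A (MNeg N))" and "GL (Imp (MNeg P) (MOr (MDia N) A))"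
  shows "GL (MOr (MDia P) (MBox A))"
proof -
  have "GL (Imp (MBox A) (MBox (MNeg N)))"
    using GL_box_mono[OF excl] .
  then have "GL (Imp (MOr (MDia N) A) (Imp (MBox A) A))"
    by (rule GL_prop_mp) auto
  then have loeb_premise: "GL (Imp (MBox (MOr (MDia N) A)) (MBox (Imp (MBox A) A)))"
    by (rule GL_box_mono)
  have "GL (Imp (MBox (MNeg P)) (MBox (MOr (MDia N) A)))"
    using GL_box_mono assms(2) .
  then show ?thesis
    by (rule GL_prop_mp[OF GL_conj[OF axL[of A] GL_conj[OF loeb_premise]]]) (simp add: MDia_def[of P])
qed

lemma GL_tr_neg: "GL (Imp (tr A) (MNeg (tr (neg A))))"
proof (induction A)
  case (And A B)
  show ?case by (rule GL_prop_mp[OF GL_conj[OF And.IH]]) auto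
next
  case (Or A B)
  show ?case by (rule GL_prop_mp[OF GL_conj[OF Or.IH]]) auto
next
  case (Box A)
  show ?case by (rule GL_prop_mp[OF GL_box_mono[OF Box.IH]]) auto
next
  case (Dia A)
  have "GL (Imp (tr (neg A)) (MNeg (tr A)))"
    by (rule GL_prop_mp[OF Dia.IH]) auto
  then show ?case by (rule GL_prop_mp[OF GL_box_mono]) auto
qed (auto intro: GL_tautology)

section \<open>The shallow calculus and its soundness\<close>

inductive sprov :: "fm set \<Rightarrow> fm set \<Rightarrow> bool" where
  s_id: "NAt a \<in> X \<Longrightarrow> At a \<in> X \<Longrightarrow> sprov P X"
| s_and: "And A B \<in> X \<Longrightarrow> sprov P (insert A (X - {And A B})) \<Longrightarrow> sprov P (insert B (X - {And A B}))
    \<Longrightarrow> sprov P X"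
| s_or: "Or A B \<in> X \<Longrightarrow> sprov P (insert A (insert B (X - {Or A B}))) \<Longrightarrow> sprov P X"
| s_box: "Box A \<in> X \<Longrightarrow> sprov (P \<union> {B. Dia B \<in> X}) {Dia (neg A), A} \<Longrightarrow> sprov P X"
| s_dia: "B \<in> P \<Longrightarrow> sprov P (insert B X) \<Longrightarrow> sprov P X"

text \<open>Under a diamond, \<open>MDiaR B\<close> collapses to \<open>MDia B\<close> (by the 4 axiom); this is what
  lets the box rule of \<open>sprov\<close> pass the diamonds of its conclusion to its premise.\<close>

definition MDiaR :: "mfm \<Rightarrow> mfm" where
  "MDiaR A = MOr A (MDia A)"

definition sprov_fm :: "fm set \<Rightarrow> fm set \<Rightarrow> mfm" where
  "sprov_fm P X = Disj ((\<lambda>B. MDiaR (tr B)) ` P \<union> tr ` X)"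

lemma finite_dia_args: "finite X \<Longrightarrow> finite {B. Dia B \<in> X}"
  using finite_vimageI[of X Dia] by (simp add: vimage_def inj_def)

lemma peval_sprov_fm:
  "finite P \<Longrightarrow> finite X \<Longrightarrow>
   peval v (sprov_fm P X) \<longleftrightarrow> (\<exists>B\<in>P. peval v (MDiaR (tr B))) \<or> (\<exists>B\<in>X. peval v (tr B))"
  by (auto simp: sprov_fm_def peval_Disj)

lemma GL_dia_MDiaR: "GL (Imp (MDia (MDiaR A)) (MDia A))"
  unfolding MDiaR_def
  by (rule GL_prop_mp[OF GL_conj[OF GL_dia_or[of A "MDia A"] GL_dia_dia[of A]]]) auto

lemma sprov_fm_box_rule:
  assumes "finite P" and "finite X" and "Box A \<in> X"
    and premise: "GL (sprov_fm (P \<union> {B. Dia B \<in> X}) {Dia (neg A), A})"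
  shows "GL (sprov_fm P X)"
proof -
  define Q where "Q = P \<union> {B. Dia B \<in> X}"
  define p where "p = Disj ((\<lambda>B. MDiaR (tr B)) ` Q)"
  have fin_Q: "finite Q"
    using assms(1,2) finite_dia_args by (simp add: Q_def)
  have "GL (Imp (MNeg p) (MOr (MDia (tr (neg A))) (tr A)))"
    by (rule GL_prop_mp[OF premise[folded Q_def]])
      (use fin_Q in \<open>auto simp: p_def peval_Disj peval_sprov_fm\<close>)
  then have box_or_dia: "GL (MOr (MDia p) (MBox (tr A)))"
    by (rule GL_loeb_disj[OF GL_tr_neg])
  have dia_p: "GL (Imp (MDia p) (Disj ((\<lambda>B. MDia (tr B)) ` Q)))"
    unfolding p_def
  proof (rule GL_dia_Disj)
    fix x
    assume "x \<in> (\<lambda>B. MDiaR (tr B)) ` Q"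
    then obtain B where x: "x = MDiaR (tr B)" and "B \<in> Q"
      by blast
    show "GL (Imp (MDia x) (Disj ((\<lambda>B. MDia (tr B)) ` Q)))"
      unfolding x by (rule GL_prop_mp[OF GL_dia_MDiaR]) (use fin_Q \<open>B \<in> Q\<close> in \<open>auto simp: peval_Disj\<close>)
  qed (use fin_Q in simp)
  show ?thesis
  proof (rule GL_prop_mp[OF GL_conj[OF box_or_dia dia_p]])
    fix v
    assume "peval v (MAnd (MOr (MDia p) (MBox (tr A))) (Imp (MDia p) (Disj ((\<lambda>B. MDia (tr B)) ` Q))))"
    then have "v (MBox (tr A)) \<or> (\<exists>B\<in>Q. peval v (MDia (tr B)))"
      using fin_Q by (auto simp: peval_Disj)
    then show "peval v (sprov_fm P X)"
      using assms(1-3) by (force simp: Q_def peval_sprov_fm MDiaR_def)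
  qed
qed

lemma sprov_sound: "sprov P X \<Longrightarrow> finite P \<Longrightarrow> finite X \<Longrightarrow> GL (sprov_fm P X)"
proof (induction rule: sprov.induct)
  case (s_id a X P)
  show ?case
  proof (rule GL_tautology)
    fix v
    have "\<exists>B\<in>X. peval v (tr B)"
      using s_id by (cases "v (Var a)") force+
    then show "peval v (sprov_fm P X)"
      using s_id by (simp add: peval_sprov_fm)
  qed
next
  case (s_and A B X P)
  show ?case
  proof (rule GL_prop_mp[OF GL_conj[OF s_and.IH]])
    fix v
    assume "peval v (MAnd (sprov_fm P (insert A (X - {And A B}))) (sprov_fm P (insert B (X - {And A B}))))"
    then show "peval v (sprov_fm P X)"
      using s_and by (cases "peval v (tr (And A B))"; force simp: peval_sprov_fm)
  qed (use s_and.prems in simp_all)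
next
  case (s_or A B X P)
  show ?case
  proof (rule GL_prop_mp[OF s_or.IH])
    fix v
    assume "peval v (sprov_fm P (insert A (insert B (X - {Or A B}))))"
    then show "peval v (sprov_fm P X)"
      using s_or by (cases "peval v (tr (Or A B))"; force simp: peval_sprov_fm)
  qed (use s_or.prems in simp_all)
next
  case (s_dia B P X)
  show ?case
  proof (rule GL_prop_mp[OF s_dia.IH])
    fix v
    assume "peval v (sprov_fm P (insert B X))"
    then show "peval v (sprov_fm P X)"
      using s_dia by (cases "peval v (tr B)"; force simp: peval_sprov_fm MDiaR_def)
  qed (use s_dia.prems in simp_all)
next
  case (s_box A X P)
  show ?case
    by (rule sprov_fm_box_rule) (use s_box in \<open>simp_all add: finite_dia_args\<close>)
qed

fun meval :: "('w \<Rightarrow> 'w \<Rightarrow> bool) \<Rightarrow> (nat \<Rightarrow> 'w \<Rightarrow> bool) \<Rightarrow> 'w \<Rightarrow> mfm \<Rightarrow> bool" where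
  "meval R V w (Var a) = V a w"
| "meval R V w Bot = False"
| "meval R V w (Imp A B) = (meval R V w A \<longrightarrow> meval R V w B)"
| "meval R V w (MBox A) = (\<forall>u. R w u \<longrightarrow> meval R V u A)"

fun feval :: "('w \<Rightarrow> 'w \<Rightarrow> bool) \<Rightarrow> (nat \<Rightarrow> 'w \<Rightarrow> bool) \<Rightarrow> 'w \<Rightarrow> fm \<Rightarrow> bool" where
  "feval R V w (At a) = V a w"
| "feval R V w (NAt a) = (\<not> V a w)"
| "feval R V w (And A B) = (feval R V w A \<and> feval R V w B)"
| "feval R V w (Or A B) = (feval R V w A \<or> feval R V w B)"
| "feval R V w (Box A) = (\<forall>u. R w u \<longrightarrow> feval R V u A)"
| "feval R V w (Dia A) = (\<exists>u. R w u \<and> feval R V u A)"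

lemma meval_tr: "meval R V w (tr A) = feval R V w A"
  by (induction A arbitrary: w) (auto simp: MNeg_def MOr_def MAnd_def MDia_def)

lemma feval_neg [simp]: "feval R V w (neg A) = (\<not> feval R V w A)"
  by (induction A arbitrary: w) auto

definition glframe :: "('w \<Rightarrow> 'w \<Rightarrow> bool) \<Rightarrow> bool" where
  "glframe R \<longleftrightarrow> transp R \<and> wf {(y, x). R x y}"

lemma glframe_loeb:
  assumes "glframe R" and "R w v"
    and step: "\<And>u. R w u \<Longrightarrow> \<forall>y. R u y \<longrightarrow> Q y \<Longrightarrow> Q u"
  shows "Q v"
proof -
  have wf: "wf {(y, x). R x y}" and trans: "transp R"
    using assms(1) by (simp_all add: glframe_def)
  from wf \<open>R w v\<close> show ?thesis
  proof (induction v rule: wf_induct_rule)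
    case (less v)
    then have "\<forall>y. R v y \<longrightarrow> Q y"
      using trans by (blast dest: transpD)
    then show ?case
      using less.prems step by blast
  qed
qed

theorem GL_sound: "GL F \<Longrightarrow> glframe R \<Longrightarrow> meval R V w F"
proof (induction arbitrary: w rule: GL.induct)
  case (axL A)
  show ?case
    using glframe_loeb[OF axL.prems, of w _ "\<lambda>u. meval R V u A"] by auto
qed (auto simp: MNeg_def)

inductive sval :: "('w \<Rightarrow> 'w \<Rightarrow> bool) \<Rightarrow> (nat \<Rightarrow> 'w \<Rightarrow> bool) \<Rightarrow> 'w \<Rightarrow> seq \<Rightarrow> bool"
  for R V where
  sval_fm: "A \<in># F \<Longrightarrow> feval R V w A \<Longrightarrow> sval R V w (Seq F S)"
| sval_br: "D \<in># S \<Longrightarrow> \<forall>u. R w u \<longrightarrow> sval R V u D \<Longrightarrow> sval R V w (Seq F S)"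

lemma sval_Seq:
  "sval R V w (Seq F S) \<longleftrightarrow> (\<exists>A\<in>#F. feval R V w A) \<or> (\<exists>D\<in>#S. \<forall>u. R w u \<longrightarrow> sval R V u D)"
  by (auto elim!: sval.cases intro: sval.intros)

lemma sval_sjoin [simp]: "sval R V w (sjoin X Y) \<longleftrightarrow> sval R V w X \<or> sval R V w Y"
  by (cases X; cases Y) (auto simp: sval_Seq)

lemma sval_sempty [simp]: "\<not> sval R V w sempty"
  by (simp add: sempty_def sval_Seq)

lemma sval_sfm [simp]: "sval R V w (sfm A) \<longleftrightarrow> feval R V w A"
  by (simp add: sfm_def sval_Seq)

lemma sval_sbr [simp]: "sval R V w (sbr D) \<longleftrightarrow> (\<forall>u. R w u \<longrightarrow> sval R V u D)"
  by (simp add: sbr_def sval_Seq)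

lemma sval_fill_valid: "(\<And>v. sval R V v X) \<Longrightarrow> sval R V w (fill G X)"
  by (induction G arbitrary: w) auto

lemma sval_fill_mono:
  "(\<And>v. sval R V v X \<Longrightarrow> sval R V v Y) \<Longrightarrow> sval R V w (fill G X) \<Longrightarrow> sval R V w (fill G Y)"
  by (induction G arbitrary: w) auto

lemma sval_fill_conj:
  "(\<And>v. sval R V v X1 \<Longrightarrow> sval R V v X2 \<Longrightarrow> sval R V v Y) \<Longrightarrow>
   sval R V w (fill G X1) \<Longrightarrow> sval R V w (fill G X2) \<Longrightarrow> sval R V w (fill G Y)"
  by (induction G arbitrary: w) auto

lemma sval_fill_drop_false:
  assumes "transp R" and "\<forall>v. v = w \<or> R w v \<longrightarrow> \<not> feval R V v A"
    and "sval R V w (fill C (sfm A))"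
  shows "sval R V w (fill C sempty)"
  using assms(2,3)
proof (induction C arbitrary: w)
  case (Nest D C)
  have "sval R V u (fill C sempty)" if "R w u" "sval R V u (fill C (sfm A))" for u
    using Nest.IH[of u] Nest.prems(1) that assms(1) by (blast dest: transpD)
  then show ?case
    using Nest.prems(2) by auto
qed auto

lemma sval_fill_nested_drop_false:
  assumes "transp R" and "depth D > 0" and "\<forall>u. R w u \<longrightarrow> \<not> feval R V u A"
    and "sval R V w (fill D (sfm A))"
  shows "sval R V w (fill D sempty)"
proof -
  obtain D0 C where D: "D = Nest D0 C"
    using assms(2) by (cases D) auto
  have "sval R V u (fill C sempty)" if "R w u" "sval R V u (fill C (sfm A))" for u
    using sval_fill_drop_false[OF assms(1)] assms(1,3) that by (blast dest: transpD)
  then show ?thesis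
    using assms(4) D by auto
qed

theorem cfprov_sound: "cfprov S \<Longrightarrow> glframe R \<Longrightarrow> sval R V w S"
proof (induction arbitrary: w rule: cfprov.induct)
  case (rid G a)
  show ?case
    by (rule sval_fill_valid) (auto simp: sval_Seq)
next
  case (rand G A B)
  show ?case
    by (rule sval_fill_conj[of R V "sfm A" "sfm B"]) (use rand in auto)
next
  case (ror G A B)
  show ?case
    by (rule sval_fill_mono[of R V "Seq {#A, B#} {#}"]) (use ror in \<open>auto simp: sval_Seq\<close>)
next
  case (rbox G A)
  have "sval R V v (sfm (Box A))" if "sval R V v (sbr (Seq {#Dia (neg A), A#} {#}))" for v
  proof (simp, intro allI impI)
    fix u
    assume "R v u"
    then show "feval R V u A"
      by (rule glframe_loeb[OF rbox.prems]) (use that in \<open>auto simp: sval_Seq\<close>)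
  qed
  then show ?case
    using rbox.IH[OF rbox.prems] by (rule sval_fill_mono)
next
  case (rdia D G A)
  have "transp R"
    using rdia.prems by (simp add: glframe_def)
  then have "sval R V v (sjoin (fill D sempty) (sfm (Dia A)))"
    if "sval R V v (sjoin (fill D (sfm A)) (sfm (Dia A)))" for v
    using that sval_fill_nested_drop_false[OF _ rdia.hyps(1)] by fastforce
  then show ?case
    using rdia.IH[OF rdia.prems] by (rule sval_fill_mono)
qed

section \<open>Countermodels from unprovable shallow sequents\<close>

fun comps :: "fm \<Rightarrow> fm set" where
  "comps (And A B) = {A, B}"
| "comps (Or A B) = {A, B}"
| "comps (Box A) = {A}"
| "comps (Dia A) = {A}"
| "comps _ = {}"

fun sub :: "fm \<Rightarrow> fm set" where
  "sub (And A B) = insert (And A B) (sub A \<union> sub B)"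
| "sub (Or A B) = insert (Or A B) (sub A \<union> sub B)"
| "sub (Box A) = insert (Box A) (sub A)"
| "sub (Dia A) = insert (Dia A) (sub A)"
| "sub A = {A}"

lemma sub_refl: "A \<in> sub A"
  by (cases A) auto

lemma finite_sub: "finite (sub A)"
  by (induction A) auto

lemma comps_sub: "F \<in> sub A \<Longrightarrow> comps F \<subseteq> sub A"
  by (induction A) (auto simp: sub_refl)

lemma sub_neg: "sub (neg A) = neg ` sub A"
  by (induction A) auto

lemma neg_neg [simp]: "neg (neg A) = A"
  by (induction A) auto

definition closed :: "fm set \<Rightarrow> bool" where
  "closed K \<longleftrightarrow> (\<forall>F\<in>K. comps F \<subseteq> K \<and> neg F \<in> K)"

definition Cl :: "fm \<Rightarrow> fm set" where
  "Cl A = sub A \<union> sub (neg A)"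

lemma closed_Cl: "closed (Cl A)"
  unfolding closed_def Cl_def
  using comps_sub[of _ A] comps_sub[of _ "neg A"] sub_neg[of A] by force

lemma finite_Cl: "finite (Cl A)"
  by (simp add: Cl_def finite_sub)

lemma mem_Cl: "A \<in> Cl A"
  by (simp add: Cl_def sub_refl)

lemma closed_And: "closed K \<Longrightarrow> And B C \<in> K \<Longrightarrow> B \<in> K \<and> C \<in> K"
  and closed_Or: "closed K \<Longrightarrow> Or B C \<in> K \<Longrightarrow> B \<in> K \<and> C \<in> K"
  and closed_Box: "closed K \<Longrightarrow> Box B \<in> K \<Longrightarrow> B \<in> K \<and> Dia (neg B) \<in> K"
  and closed_Dia: "closed K \<Longrightarrow> Dia B \<in> K \<Longrightarrow> B \<in> K"
  unfolding closed_def by force+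

lemma size_neg [simp]: "size (neg A) = size A"
  by (induction A) auto

lemma neg_ne_components [simp]:
  "B \<noteq> Or (neg B) C" "B \<noteq> Or C (neg B)" "B \<noteq> And (neg B) C" "B \<noteq> And C (neg B)"
  by (auto dest: arg_cong[where f = size])

lemma sprov_neg_id: "B \<in> X \<Longrightarrow> neg B \<in> X \<Longrightarrow> sprov P X"
proof (induction B arbitrary: P X)
  case (And B C)
  have "sprov P (insert D (X - {And B C}))" if "D = B \<or> D = C" for D
  proof (rule s_or[of "neg B" "neg C"])
    show "sprov P (insert (neg B) (insert (neg C) (insert D (X - {And B C}) - {Or (neg B) (neg C)})))"
      using that by (auto intro: And.IH)
  qed (use And.prems that in auto)
  then show ?case
    using And.prems(1) by (blast intro: s_and)
next
  case (Or B C)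
  have "sprov P (insert B (insert C (X - {Or B C})))"
  proof (rule s_and[of "neg B" "neg C"])
    show "sprov P (insert (neg B) (insert B (insert C (X - {Or B C})) - {And (neg B) (neg C)}))"
      by (auto intro: Or.IH)
    show "sprov P (insert (neg C) (insert B (insert C (X - {Or B C})) - {And (neg B) (neg C)}))"
      by (auto intro: Or.IH)
  qed (use Or.prems in auto)
  then show ?case
    using Or.prems(1) by (blast intro: s_or)
next
  case (Box B)
  have "sprov (P \<union> {D. Dia D \<in> X}) {Dia (neg B), B}"
    by (rule s_dia[of "neg B"]) (use Box.prems in \<open>auto intro: Box.IH\<close>)
  then show ?case
    using Box.prems(1) by (rule s_box[rotated])
next
  case (Dia B)
  have "Box (neg B) \<in> X"
    using Dia.prems(2) by simp
  moreover have "sprov (P \<union> {D. Dia D \<in> X}) {Dia (neg (neg B)), neg B}"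
    by (rule s_dia[of B]) (use Dia.prems in \<open>auto intro: Dia.IH\<close>)
  ultimately show ?case
    by (rule s_box)
qed (auto intro: s_id)

lemma sprov_inherit: "finite Q \<Longrightarrow> Q \<subseteq> P \<Longrightarrow> sprov P (X \<union> Q) \<Longrightarrow> sprov P X"
proof (induction Q rule: finite_induct)
  case (insert q Q)
  then show ?case
    using s_dia[of q P "X \<union> Q"] by simp
qed simp

text \<open>The shallow rules delete their principal formula, so an unprovable core \<open>X\<close> loses the
  conjunctions and disjunctions it decomposes; the refuted set \<open>S\<close> keeps them, and the
  Hintikka condition refers to both.\<close>

fun decomposed :: "fm set \<Rightarrow> fm set \<Rightarrow> fm \<Rightarrow> bool" where
  "decomposed X S (And B C) \<longleftrightarrow> B \<in> S \<or> C \<in> S"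
| "decomposed X S (Or B C) \<longleftrightarrow> B \<in> S \<and> C \<in> S"
| "decomposed X S F \<longleftrightarrow> F \<in> X"

lemma decomposed_mono: "decomposed X S F \<Longrightarrow> S \<subseteq> S' \<Longrightarrow> decomposed X S' F"
  by (cases F) auto

lemma sprov_decompose:
  assumes "\<not> sprov P Y" and "F \<in> Y" and "F = And B C \<or> F = Or B C"
  obtains Z where "Z \<subseteq> {B, C}" and "(\<Sum>G\<in>Z. size G) < size F"
    and "\<not> sprov P (Z \<union> (Y - {F}))" and "\<And>X S. Z \<subseteq> S \<Longrightarrow> decomposed X S F"
  using assms(3)
proof
  assume F: "F = And B C"
  then obtain D where "D = B \<or> D = C" and "\<not> sprov P (insert D (Y - {F}))"
    using assms(1,2) s_and by blast
  then show thesis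
    using that[of "{D}"] F by auto
next
  assume F: "F = Or B C"
  then have "\<not> sprov P ({B, C} \<union> (Y - {F}))"
    using assms(1,2) s_or by auto
  moreover have "(\<Sum>G\<in>{B, C}. size G) < size F"
    using F by (cases "B = C") auto
  ultimately show thesis
    using that[of "{B, C}"] F by auto
qed

lemma sprov_saturate:
  assumes "closed K" and "finite Y" and "Y \<subseteq> K" and "\<not> sprov P Y"
  shows "\<exists>X S. Y \<subseteq> S \<and> S \<subseteq> K \<and> X \<subseteq> S \<and> \<not> sprov P X \<and> (\<forall>F\<in>S. decomposed X S F)"
  using assms(2-4)
proof (induction "\<Sum>F\<in>Y. size F" arbitrary: Y rule: less_induct)
  case less
  show ?case
  proof (cases "\<exists>F\<in>Y. \<exists>B C. F = And B C \<or> F = Or B C")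
    case True
    then obtain F B C where F: "F \<in> Y" "F = And B C \<or> F = Or B C"
      by blast
    then have "B \<in> K" "C \<in> K"
      using closed_And closed_Or assms(1) less.prems(2) by blast+
    obtain Z where Z: "Z \<subseteq> {B, C}" "(\<Sum>G\<in>Z. size G) < size F"
      "\<not> sprov P (Z \<union> (Y - {F}))" "\<And>X S. Z \<subseteq> S \<Longrightarrow> decomposed X S F"
      using sprov_decompose[OF less.prems(3) F] by blast
    have fin_Z: "finite Z"
      using Z(1) finite_subset by blast
    have "(\<Sum>G\<in>Z \<union> (Y - {F}). size G) \<le> (\<Sum>G\<in>Z. size G) + (\<Sum>G\<in>Y - {F}. size G)"
      using sum_Un_nat[OF fin_Z, of "Y - {F}" size] less.prems(1) by simp
    also have "\<dots> < (\<Sum>G\<in>Y. size G)"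
      using Z(2) sum.remove[OF less.prems(1) F(1), of size] by simp
    finally have smaller: "(\<Sum>G\<in>Z \<union> (Y - {F}). size G) < (\<Sum>G\<in>Y. size G)" .
    have "finite (Z \<union> (Y - {F}))" and "Z \<union> (Y - {F}) \<subseteq> K"
      using fin_Z less.prems(1,2) Z(1) \<open>B \<in> K\<close> \<open>C \<in> K\<close> by auto
    then obtain X S where XS: "Z \<union> (Y - {F}) \<subseteq> S" "S \<subseteq> K" "X \<subseteq> S" "\<not> sprov P X"
      "\<forall>G\<in>S. decomposed X S G"
      using less.hyps[OF smaller _ _ Z(3)] by blast
    have "\<forall>G\<in>insert F S. decomposed X (insert F S) G"
      using XS(1,5) Z(4) decomposed_mono[of X S _ "insert F S"] by blast
    then show ?thesis
      using XS F(1) less.prems(2) by (intro exI[of _ X] exI[of _ "insert F S"]) auto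
  next
    case False
    have "decomposed Y Y F" if "F \<in> Y" for F
      using False that by (cases F) auto
    then show ?thesis
      using less.prems by blast
  qed
qed

text \<open>A world of the countermodel consists of its inherited formulas, an unprovable shallow
  sequent (the core) and the saturation of the core, all of whose formulas are false there.\<close>

datatype world = World (inh: "fm set") (core: "fm set") (refuted: "fm set")

definition is_world :: "fm set \<Rightarrow> world \<Rightarrow> bool" where
  "is_world K w \<longleftrightarrow> inh w \<subseteq> refuted w \<and> core w \<subseteq> refuted w \<and> refuted w \<subseteq> K
     \<and> \<not> sprov (inh w) (core w) \<and> (\<forall>F\<in>refuted w. decomposed (core w) (refuted w) F)"

definition passed :: "world \<Rightarrow> fm set" where
  "passed w = inh w \<union> {B. Dia B \<in> core w}"

text \<open>The diamond witness makes \<open>passed\<close> grow strictly along the relation, which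
  bounds chains by the size of the closure.\<close>

definition cm_rel :: "fm set \<Rightarrow> world \<Rightarrow> world \<Rightarrow> bool" where
  "cm_rel K w v \<longleftrightarrow> is_world K w \<and> is_world K v \<and> passed w \<subseteq> inh v
     \<and> (\<exists>B. Dia B \<in> core v \<and> B \<notin> passed w)"

definition cm_val :: "nat \<Rightarrow> world \<Rightarrow> bool" where
  "cm_val a w \<longleftrightarrow> NAt a \<in> refuted w"

lemma passed_subset: "closed K \<Longrightarrow> is_world K w \<Longrightarrow> passed w \<subseteq> K"
  unfolding is_world_def passed_def using closed_Dia by blast

lemma cm_rel_passed: "cm_rel K w v \<Longrightarrow> passed w \<subset> passed v"
  unfolding cm_rel_def passed_def by blast

lemma glframe_cm_rel:
  assumes "closed K" and "finite K"
  shows "glframe (cm_rel K)"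
  unfolding glframe_def
proof
  show "transp (cm_rel K)"
  proof (rule transpI)
    fix u v w
    assume uv: "cm_rel K u v" and vw: "cm_rel K v w"
    then have "passed u \<subseteq> passed v"
      using cm_rel_passed by blast
    then show "cm_rel K u w"
      using uv vw unfolding cm_rel_def by blast
  qed
  have "{(v, w). cm_rel K w v} \<subseteq> measure (\<lambda>w. card (K - passed w))"
  proof clarsimp
    fix w v
    assume "cm_rel K w v"
    moreover have "passed v \<subseteq> K"
      using \<open>cm_rel K w v\<close> passed_subset[OF assms(1)] by (simp add: cm_rel_def)
    ultimately have "K - passed v \<subset> K - passed w"
      using cm_rel_passed by blast
    then show "card (K - passed v) < card (K - passed w)"
      using assms(2) by (simp add: psubset_card_mono)
  qed
  then show "wf {(v, w). cm_rel K w v}"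
    using wf_subset wf_measure by blast
qed

lemma world_exists:
  assumes "closed K" and "finite K" and "P \<subseteq> K" and "Y \<subseteq> K" and "\<not> sprov P Y"
  shows "\<exists>w. is_world K w \<and> inh w = P \<and> Y \<subseteq> refuted w"
proof -
  have fin: "finite P" "finite Y"
    using assms(2-4) finite_subset by blast+
  then have "\<not> sprov P (Y \<union> P)"
    using sprov_inherit assms(5) by blast
  then obtain X S where "Y \<union> P \<subseteq> S" "S \<subseteq> K" "X \<subseteq> S" "\<not> sprov P X" "\<forall>F\<in>S. decomposed X S F"
    using sprov_saturate[OF assms(1)] fin assms(3,4) by (metis finite_UnI le_sup_iff)
  then show ?thesis
    by (intro exI[of _ "World P X S"]) (simp add: is_world_def)
qed

lemma is_worldD:
  assumes "is_world K w"
  shows "inh w \<subseteq> refuted w" and "core w \<subseteq> refuted w" and "refuted w \<subseteq> K"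
    and "\<not> sprov (inh w) (core w)" and "F \<in> refuted w \<Longrightarrow> decomposed (core w) (refuted w) F"
  using assms by (simp_all add: is_world_def)

lemma cm_box_witness:
  assumes "closed K" and "finite K" and w: "is_world K w" and "Box B \<in> core w"
  obtains v where "cm_rel K w v" and "B \<in> refuted v"
proof -
  have not_sprov: "\<not> sprov (passed w) {Dia (neg B), B}"
  proof
    assume "sprov (passed w) {Dia (neg B), B}"
    then have "sprov (inh w) (core w)"
      using s_box[OF assms(4)] by (simp add: passed_def)
    then show False
      using is_worldD(4)[OF w] by blast
  qed
  have "Box B \<in> K"
    using assms(4) is_worldD(2,3)[OF w] by blast
  then have "{Dia (neg B), B} \<subseteq> K"
    using closed_Box[OF assms(1)] by blast
  then obtain v where v: "is_world K v" "inh v = passed w" "{Dia (neg B), B} \<subseteq> refuted v"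
    using world_exists[OF assms(1,2) passed_subset[OF assms(1) w] _ not_sprov] by blast
  have "neg B \<notin> passed w"
  proof
    assume "neg B \<in> passed w"
    moreover have "sprov (passed w) (insert (neg B) {Dia (neg B), B})"
      by (rule sprov_neg_id[of B]) simp_all
    ultimately show False
      using not_sprov s_dia by blast
  qed
  moreover have "Dia (neg B) \<in> core v"
    using is_worldD(5)[OF v(1), of "Dia (neg B)"] v(3) by simp
  ultimately have "cm_rel K w v"
    using w v(1,2) unfolding cm_rel_def by blast
  then show thesis
    using that v(3) by blast
qed

lemma cm_truth:
  assumes "closed K" and "finite K"
  shows "is_world K w \<Longrightarrow> F \<in> refuted w \<Longrightarrow> \<not> feval (cm_rel K) cm_val w F"
proof (induction F arbitrary: w)
  case (At a)
  have "At a \<in> core w" and "NAt a \<in> refuted w \<Longrightarrow> NAt a \<in> core w"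
    using is_worldD(5)[OF At.prems(1), of "At a"] is_worldD(5)[OF At.prems(1), of "NAt a"] At.prems(2)
    by simp_all
  then show ?case
    using is_worldD(4)[OF At.prems(1)] s_id by (auto simp: cm_val_def)
next
  case (NAt a)
  then show ?case
    by (simp add: cm_val_def)
next
  case (And B C)
  then have "B \<in> refuted w \<or> C \<in> refuted w"
    using is_worldD(5)[OF And.prems(1), of "And B C"] by simp
  then show ?case
    using And.IH And.prems(1) by auto
next
  case (Or B C)
  then have "B \<in> refuted w \<and> C \<in> refuted w"
    using is_worldD(5)[OF Or.prems(1), of "Or B C"] by simp
  then show ?case
    using Or.IH Or.prems(1) by auto
next
  case (Dia B)
  then have "B \<in> passed w"
    using is_worldD(5)[OF Dia.prems(1), of "Dia B"] by (simp add: passed_def)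
  then have "is_world K v \<and> B \<in> refuted v" if "cm_rel K w v" for v
    using that is_worldD(1) unfolding cm_rel_def by blast
  then have "\<not> feval (cm_rel K) cm_val v B" if "cm_rel K w v" for v
    using Dia.IH that by blast
  then show ?case
    by simp
next
  case (Box B)
  then have "Box B \<in> core w"
    using is_worldD(5)[OF Box.prems(1), of "Box B"] by simp
  then obtain v where "cm_rel K w v" and "B \<in> refuted v"
    using cm_box_witness[OF assms Box.prems(1)] by blast
  moreover have "is_world K v"
    using \<open>cm_rel K w v\<close> by (simp add: cm_rel_def)
  ultimately show ?case
    using Box.IH by auto
qed

theorem sprov_complete:
  assumes "\<And>(R :: world \<Rightarrow> world \<Rightarrow> bool) V w. glframe R \<Longrightarrow> feval R V w A"
  shows "sprov {} {A}"
proof (rule ccontr)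
  assume "\<not> sprov {} {A}"
  then obtain w where "is_world (Cl A) w" and "A \<in> refuted w"
    using world_exists[OF closed_Cl[of A] finite_Cl[of A], where P = "{}" and Y = "{A}"] mem_Cl[of A] by auto
  then have "\<not> feval (cm_rel (Cl A)) cm_val w A"
    by (rule cm_truth[OF closed_Cl finite_Cl])
  moreover have "feval (cm_rel (Cl A)) cm_val w A"
    by (rule assms[OF glframe_cm_rel[OF closed_Cl finite_Cl]])
  ultimately show False
    by contradiction
qed

section \<open>Embedding into the nested calculus\<close>

fun dia_args :: "seq \<Rightarrow> fm set" where
  "dia_args (Seq F S) = {B. Dia B \<in># F}"

fun outer_dias :: "ctx \<Rightarrow> fm set" where
  "outer_dias (Hole D) = {}"
| "outer_dias (Nest D C) = dia_args D \<union> outer_dias C"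

fun ctx_join :: "ctx \<Rightarrow> seq \<Rightarrow> ctx" where
  "ctx_join (Hole D) W = Hole (sjoin D W)"
| "ctx_join (Nest D C) W = Nest D (ctx_join C W)"

fun ctx_push :: "ctx \<Rightarrow> seq \<Rightarrow> ctx" where
  "ctx_push (Hole D) W = Nest (sjoin D W) (Hole sempty)"
| "ctx_push (Nest D C) W = Nest D (ctx_push C W)"

lemma sjoin_assoc: "sjoin (sjoin X Y) Z = sjoin X (sjoin Y Z)"
  by (cases X; cases Y; cases Z) (simp add: add.assoc)

lemma sjoin_sempty [simp]: "sjoin X sempty = X" "sjoin sempty X = X"
  by (cases X; simp add: sempty_def)+

lemma fill_ctx_join: "fill (ctx_join G W) Z = fill G (sjoin W Z)"
  by (induction G) (simp_all add: sjoin_assoc)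

lemma fill_ctx_push: "fill (ctx_push G W) Z = fill G (sjoin W (sbr Z))"
  by (induction G) (simp_all add: sjoin_assoc)

lemma outer_dias_ctx_join [simp]: "outer_dias (ctx_join G W) = outer_dias G"
  by (induction G) auto

lemma dia_args_sjoin: "dia_args (sjoin X Y) = dia_args X \<union> dia_args Y"
  by (cases X; cases Y) auto

lemma outer_dias_ctx_push: "outer_dias G \<union> dia_args W \<subseteq> outer_dias (ctx_push G W)"
  by (induction G) (auto simp: dia_args_sjoin)

lemma depth_ctx_join [simp]: "depth (ctx_join D W) = depth D"
  by (induction D) auto

lemma outer_dias_split:
  assumes "B \<in> outer_dias G"
  obtains G1 D where "depth D > 0" and "\<And>Z. fill G Z = fill G1 (sjoin (fill D Z) (sfm (Dia B)))"
  using assms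
proof (induction G arbitrary: thesis)
  case (Nest D0 C)
  show ?case
  proof (cases "B \<in> dia_args D0")
    case True
    then obtain F S where "D0 = Seq (add_mset (Dia B) F) S"
      by (cases D0) (auto dest: multi_member_split)
    then have "fill (Nest D0 C) Z = fill (Hole (Seq F S)) (sjoin (fill (Nest sempty C) Z) (sfm (Dia B)))" for Z
      by (simp add: sbr_def sfm_def sempty_def)
    then show ?thesis
      by (intro Nest.prems(1)[of "Nest sempty C" "Hole (Seq F S)"]) simp_all
  next
    case False
    then obtain G1 D where "depth D > 0" "\<And>Z. fill C Z = fill G1 (sjoin (fill D Z) (sfm (Dia B)))"
      using Nest.IH Nest.prems(2) by auto
    then show ?thesis
      by (intro Nest.prems(1)[of D "Nest D0 G1"]) simp_all
  qed
qed simp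

theorem sprov_embed:
  "sprov P X \<Longrightarrow> X \<subseteq> set_mset M \<Longrightarrow> P \<subseteq> outer_dias G \<Longrightarrow> cfprov (fill G (Seq M {#}))"
proof (induction arbitrary: G M rule: sprov.induct)
  case (s_id a X P)
  then obtain M1 where M1: "M = add_mset (NAt a) M1"
    by (blast dest: multi_member_split)
  moreover have "At a \<in># M1"
    using s_id M1 by auto
  ultimately obtain M' where "M = add_mset (NAt a) (add_mset (At a) M')"
    by (blast dest: multi_member_split)
  then have "fill G (Seq M {#}) = fill (ctx_join G (Seq M' {#})) (Seq {#NAt a, At a#} {#})"
    by (simp add: fill_ctx_join)
  then show ?case
    by (simp add: rid)
next
  case (s_and A B X P)
  then obtain M' where M: "M = add_mset (And A B) M'"
    by (blast dest: multi_member_split)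
  let ?G = "ctx_join G (Seq M' {#})"
  have "cfprov (fill ?G (sfm A))" and "cfprov (fill ?G (sfm B))"
    using s_and.IH[of "add_mset A M'"] s_and.IH[of "add_mset B M'"] s_and.prems M
    by (auto simp: fill_ctx_join sfm_def)
  then have "cfprov (fill ?G (sfm (And A B)))"
    by (rule rand)
  then show ?case
    by (simp add: fill_ctx_join M sfm_def)
next
  case (s_or A B X P)
  then obtain M' where M: "M = add_mset (Or A B) M'"
    by (blast dest: multi_member_split)
  let ?G = "ctx_join G (Seq M' {#})"
  have "cfprov (fill ?G (Seq {#A, B#} {#}))"
    using s_or.IH[of "add_mset A (add_mset B M')"] s_or.prems M
    by (auto simp: fill_ctx_join)
  then have "cfprov (fill ?G (sfm (Or A B)))"
    by (rule ror)
  then show ?case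
    by (simp add: fill_ctx_join M sfm_def)
next
  case (s_box A X P)
  then obtain M' where M: "M = add_mset (Box A) M'"
    by (blast dest: multi_member_split)
  let ?W = "Seq M' {#}"
  have "P \<union> {B. Dia B \<in> X} \<subseteq> outer_dias (ctx_push G ?W)"
    using s_box.prems M outer_dias_ctx_push[of G ?W] by auto
  then have "cfprov (fill (ctx_push G ?W) (Seq {#Dia (neg A), A#} {#}))"
    by (intro s_box.IH) simp_all
  then have "cfprov (fill (ctx_join G ?W) (sbr (Seq {#Dia (neg A), A#} {#})))"
    by (simp add: fill_ctx_join fill_ctx_push)
  then have "cfprov (fill (ctx_join G ?W) (sfm (Box A)))"
    by (rule rbox)
  then show ?case
    by (simp add: fill_ctx_join M sfm_def)
next
  case (s_dia B P X)
  then have "B \<in> outer_dias G"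
    by blast
  then obtain D G1 where split: "depth D > 0" "\<And>Z. fill G Z = fill G1 (sjoin (fill D Z) (sfm (Dia B)))"
    using outer_dias_split by metis
  let ?D = "ctx_join D (Seq M {#})"
  have "cfprov (fill G (Seq (add_mset B M) {#}))"
    by (intro s_dia.IH) (use s_dia.prems in auto)
  then have "cfprov (fill G1 (sjoin (fill ?D (sfm B)) (sfm (Dia B))))"
    using split(2) by (simp add: fill_ctx_join sfm_def)
  with split(1) have "cfprov (fill G1 (sjoin (fill ?D sempty) (sfm (Dia B))))"
    by (intro rdia[of ?D]) simp_all
  moreover have "fill G (Seq M {#}) = fill G1 (sjoin (fill ?D sempty) (sfm (Dia B)))"
    by (simp add: fill_ctx_join split(2)[of "Seq M {#}"])
  ultimately show ?case
    by simp
qed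

theorem mainTheorem1:
  shows "GL (tr A) \<longleftrightarrow> cfprov (sfm A)"
proof
  assume "GL (tr A)"
  then have "sprov {} {A}"
    by (intro sprov_complete) (simp add: GL_sound flip: meval_tr)
  then have "cfprov (fill (Hole sempty) (Seq {#A#} {#}))"
    by (rule sprov_embed) auto
  then show "cfprov (sfm A)"
    by (simp add: sfm_def)
next
  assume "cfprov (sfm A)"
  then have "sprov {} {A}"
    by (intro sprov_complete) (metis cfprov_sound sval_sfm)
  then have "GL (sprov_fm {} {A})"
    by (rule sprov_sound) simp_all
  then show "GL (tr A)"
    by (rule GL_prop_mp) (simp add: peval_sprov_fm)
qed

end
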